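(* Let $a$ be a limit point of a topological space $\mathfrak X$, and let $\{\varphi_n(x)\}_{n\ge1}$ be an asymptotic sequence over $\mathfrak X$ at $x=a$ such that each $\varphi_n$ is nonzero in a punctured neighbourhood of $a$. Let $\{\psi_n(x)\}_{n\ge1}$ be any sequence of complex-valued functions such that $\psi_n(x)-\varphi_n(x)=o(\varphi_m(x))$ $(x\to a)_{\mathfrak X}$ for all positive integers $n\le m$. Then $\{\psi_n(x)\}$ is also an asymptotic sequence over $\mathfrak X$ at $x=a$. Moreover, if $N$ is a positive integer or $\infty$, then for any complex-valued $f(x)$ and complex numbers $a_n$, the asymptotic expansion $f(x)\sim\sum_{n=1}^N a_n\varphi_n(x)$ $(x\to a)_{\mathfrak X}$ of order $N$ holds if and only if the asymptotic expansion $f(x)\sim\sum_{n=1}^N a_n\psi_n(x)$ $(x\to a)_{\mathfrak X}$ of order $N$ holds.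
   Context: $f=o(g)$ $(x\to a)_{\mathfrak X}$: for every $M>0$ there is a punctured neighbourhood $U\subseteq\mathfrak X$ of $a$ with $|f|\le M|g|$ on $U$. Asymptotic sequence at $a$: $\varphi_{n+1}=o(\varphi_n)$ for all $n$. Asymptotic expansion $f\sim\sum_{n=1}^N a_n\varphi_n$ of order $N$: $f-\sum_{k=1}^n a_k\varphi_k=o(\varphi_n)$ for all positive integers $n\le N$ (for $N=\infty$: for all $n$). *)

theory Defs
  imports "HOL-Analysis.Analysis" "HOL-Library.Landau_Symbols" "HOL-Library.Extended_Nat"
begin

definition asymp_sequence :: "'a filter \<Rightarrow> (nat \<Rightarrow> 'a \<Rightarrow> complex) \<Rightarrow> bool" where
  "asymp_sequence F \<phi> \<longleftrightarrow> (\<forall>n\<ge>1. \<phi> (Suc n) \<in> o[F](\<phi> n))"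

definition asymp_expansion ::
  "'a filter \<Rightarrow> ('a \<Rightarrow> complex) \<Rightarrow> (nat \<Rightarrow> complex) \<Rightarrow> (nat \<Rightarrow> 'a \<Rightarrow> complex) \<Rightarrow> enat \<Rightarrow> bool" where
  "asymp_expansion F f c \<phi> N \<longleftrightarrow>
     (\<forall>n::nat. 1 \<le> n \<and> enat n \<le> N \<longrightarrow>
        (\<lambda>x. f x - (\<Sum>k=1..n. c k * \<phi> k x)) \<in> o[F](\<phi> n))"

end

theory Submission
  imports Defs
begin

text \<open>Under the hypothesis, each \<open>\<psi>\<^sub>n\<close> is asymptotically equivalent to \<open>\<phi>\<^sub>n\<close>, so both
  have the same little-o class; this gives the asymptotic sequence property at once. For the
  expansions, the partial sums \<open>c\<^sub>1\<phi>\<^sub>1 + \<dots> + c\<^sub>n\<phi>\<^sub>n\<close> and \<open>c\<^sub>1\<psi>\<^sub>1 + \<dots> + c\<^sub>n\<psi>\<^sub>n\<close>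
  differ by a finite sum of terms that are \<open>o(\<phi>\<^sub>n)\<close>, so the two remainders are
  \<open>o(\<phi>\<^sub>n)\<close> together.\<close>

lemma bigtheta_if_diff_smallo:
  fixes f g :: "'a \<Rightarrow> 'b :: real_normed_field"
  assumes "(\<lambda>x. f x - g x) \<in> o[F](g)"
  shows "f \<in> \<Theta>[F](g)"
  using assms by (intro asymp_equiv_imp_bigtheta smallo_imp_asymp_equiv)

lemma smallo_diff_iff_of_diff_smallo:
  fixes f u v g :: "'a \<Rightarrow> 'b :: real_normed_field"
  assumes "(\<lambda>x. u x - v x) \<in> o[F](g)"
  shows "(\<lambda>x. f x - u x) \<in> o[F](g) \<longleftrightarrow> (\<lambda>x. f x - v x) \<in> o[F](g)"
proof
  assume "(\<lambda>x. f x - u x) \<in> o[F](g)"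
  from sum_in_smallo(1)[OF this assms] show "(\<lambda>x. f x - v x) \<in> o[F](g)"
    by simp
next
  assume "(\<lambda>x. f x - v x) \<in> o[F](g)"
  from sum_in_smallo(2)[OF this assms] show "(\<lambda>x. f x - u x) \<in> o[F](g)"
    by simp
qed

lemma linear_combination_diff_smallo:
  fixes \<phi> \<psi> :: "nat \<Rightarrow> 'a \<Rightarrow> 'b :: real_normed_field"
  assumes "\<And>k. k \<in> A \<Longrightarrow> (\<lambda>x. \<psi> k x - \<phi> k x) \<in> o[F](g)"
  shows "(\<lambda>x. (\<Sum>k\<in>A. c k * \<psi> k x) - (\<Sum>k\<in>A. c k * \<phi> k x)) \<in> o[F](g)"
proof -
  have "(\<lambda>x. \<Sum>k\<in>A. c k * (\<psi> k x - \<phi> k x)) \<in> o[F](g)"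
  proof (rule big_sum_in_smallo)
    fix k assume "k \<in> A"
    then show "(\<lambda>x. c k * (\<psi> k x - \<phi> k x)) \<in> o[F](g)"
      using assms by (cases "c k = 0") auto
  qed
  then show ?thesis
    by (simp add: algebra_simps sum_subtractf)
qed

locale asymp_perturbation =
  fixes F :: "'a filter" and \<phi> \<psi> :: "nat \<Rightarrow> 'a \<Rightarrow> complex"
  assumes diff_smallo: "\<And>n m. 1 \<le> n \<Longrightarrow> n \<le> m \<Longrightarrow> (\<lambda>x. \<psi> n x - \<phi> n x) \<in> o[F](\<phi> m)"
begin

lemma smallo_eq: "1 \<le> n \<Longrightarrow> o[F](\<psi> n) = o[F](\<phi> n)"
  using diff_smallo[of n n]
  by (intro landau_o.small.cong_bigtheta bigtheta_if_diff_smallo) auto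

lemma asymp_sequence_iff: "asymp_sequence F \<psi> \<longleftrightarrow> asymp_sequence F \<phi>"
proof -
  have "\<psi> (Suc n) \<in> o[F](\<phi> n) \<longleftrightarrow> \<phi> (Suc n) \<in> o[F](\<phi> n)" if "1 \<le> n" for n
    using diff_smallo[of "Suc n" "Suc n"] that
    by (intro landau_o.small.in_cong_bigtheta bigtheta_if_diff_smallo) auto
  then show ?thesis
    unfolding asymp_sequence_def by (simp add: smallo_eq)
qed

lemma asymp_expansion_iff:
  "asymp_expansion F f c \<psi> N \<longleftrightarrow> asymp_expansion F f c \<phi> N"
proof -
  have "(\<lambda>x. f x - (\<Sum>k=1..n. c k * \<psi> k x)) \<in> o[F](\<phi> n) \<longleftrightarrow>
        (\<lambda>x. f x - (\<Sum>k=1..n. c k * \<phi> k x)) \<in> o[F](\<phi> n)" for n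
    by (intro smallo_diff_iff_of_diff_smallo linear_combination_diff_smallo diff_smallo) auto
  then show ?thesis
    unfolding asymp_expansion_def by (auto simp: smallo_eq)
qed

end

theorem proposition2p2:
  fixes a :: "'a :: topological_space"
    and \<phi> \<psi> :: "nat \<Rightarrow> 'a \<Rightarrow> complex"
  assumes "a islimpt (UNIV :: 'a set)"
    and "asymp_sequence (at a) \<phi>"
    and "\<forall>n\<ge>1. eventually (\<lambda>x. \<phi> n x \<noteq> 0) (at a)"
    and "\<forall>n m. 1 \<le> n \<and> n \<le> m \<longrightarrow> (\<lambda>x. \<psi> n x - \<phi> n x) \<in> o[at a](\<phi> m)"
  shows "asymp_sequence (at a) \<psi> \<and>
    (\<forall>(N::enat) (f :: 'a \<Rightarrow> complex) (c :: nat \<Rightarrow> complex). 1 \<le> N \<longrightarrow>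
       (asymp_expansion (at a) f c \<phi> N \<longleftrightarrow> asymp_expansion (at a) f c \<psi> N))"
proof -
  \<comment> \<open>Landau symbols make sense along any filter.\<close>
  interpret asymp_perturbation "at a" \<phi> \<psi>
    using assms(4) by unfold_locales blast
  show ?thesis
    using assms(2) asymp_sequence_iff asymp_expansion_iff by blast
qed

end
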